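(* Let $m\ge0$, let $f:\mathbb{R}^n\to\mathbb{R}$ be $m$-weakly convex, and consider one call of the subroutine ProxDescent$(x_k,\beta,\rho)$ (defined in the context) with $\beta\in(0,1)$, $\rho>0$, $\alpha=m+\rho$. Let $\Delta_k:=f(x_k)-f_\alpha(x_k)$ and assume $\Delta_k>0$. Then the while-loop terminates after finitely many steps, and the number $T_k$ of trial points computed satisfies $$T_k\le\frac{8G_k^2}{(1-\beta)^2\rho\,\Delta_k},\qquad\text{where } G_k=\max_{1\le j\le T_k}\|g_j\|.$$
   Context: A function $f$ is $m$-weakly convex ($m\ge 0$) if $x\mapsto f(x)+\frac{m}{2}\|x\|^2$ is convex; its subdifferential is $\partial f(x)=\{v: f(y)\ge f(x)+\langle v,y-x\rangle-\frac{m}{2}\|y-x\|^2\ \forall y\}$. For $\alpha>m$, $f_\alpha(x)=\inf_y\{f(y)+\frac\alpha2\|y-x\|^2\}$ (Moreau envelope). Subroutine ProxDescent$(x_k,\beta,\rho)$: set $j=1$, choose $g_1\in\partial f(x_k)$, let $\tilde f_1(x)=f(x_k)+\langle g_1,x-x_k\rangle$, and compute $z_2=\arg\min_x\{\tilde f_1(x)+\frac\rho2\|x-x_k\|^2\}$. While $f(x_k)-\big(f(z_{j+1})+\frac m2\|z_{j+1}-x_k\|^2\big)<\beta\big(f(x_k)-\tilde f_j(z_{j+1})\big)$: choose $g_{j+1}$ with $g_{j+1}-m(z_{j+1}-x_k)\in\partial f(z_{j+1})$ and a convex $\tilde f_{j+1}:\mathbb{R}^n\to\mathbb{R}$ such that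 for all $x$: (i) $\tilde f_{j+1}(x)\le f(x)+\frac m2\|x-x_k\|^2$; (ii) $\tilde f_{j+1}(x)\ge\tilde f_j(z_{j+1})+\langle s_{j+1},x-z_{j+1}\rangle$ with $s_{j+1}=\rho(x_k-z_{j+1})$; (iii) $\tilde f_{j+1}(x)\ge f(z_{j+1})+\frac m2\|z_{j+1}-x_k\|^2+\langle g_{j+1},x-z_{j+1}\rangle$; compute $z_{j+2}=\arg\min_x\{\tilde f_{j+1}(x)+\frac\rho2\|x-x_k\|^2\}$ and increase $j$ by one. On exit, return $z_{j+1}$. $T_k$ denotes the number of trial points $z_2,\dots,z_{T_k+1}$ computed in the call (equivalently the number of vectors $g_1,\dots,g_{T_k}$ used). *)

theory Defs
  imports "HOL-Analysis.Analysis"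
begin

definition weakly_convex :: "real \<Rightarrow> ('a::real_inner \<Rightarrow> real) \<Rightarrow> bool" where
  "weakly_convex m f \<longleftrightarrow> m \<ge> 0 \<and> convex_on UNIV (\<lambda>x. f x + m / 2 * (norm x)\<^sup>2)"

definition wsubdiff :: "real \<Rightarrow> ('a::real_inner \<Rightarrow> real) \<Rightarrow> 'a \<Rightarrow> 'a set" where
  "wsubdiff m f x = {v. \<forall>y. f y \<ge> f x + inner v (y - x) - m / 2 * (norm (y - x))\<^sup>2}"

definition moreau_env :: "('a::real_normed_vector \<Rightarrow> real) \<Rightarrow> real \<Rightarrow> 'a \<Rightarrow> real" where
  "moreau_env f \<alpha> x = (INF y. f y + \<alpha> / 2 * (norm (y - x))\<^sup>2)"

definition is_prox_min :: "('a::real_normed_vector \<Rightarrow> real) \<Rightarrow> real \<Rightarrow> 'a \<Rightarrow> 'a \<Rightarrow> bool" where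
  "is_prox_min h \<rho> xk z \<longleftrightarrow>
     (\<forall>x. h z + \<rho> / 2 * (norm (z - xk))\<^sup>2 \<le> h x + \<rho> / 2 * (norm (x - xk))\<^sup>2)"

definition pd_continue ::
  "('a::real_normed_vector \<Rightarrow> real) \<Rightarrow> real \<Rightarrow> real \<Rightarrow> 'a \<Rightarrow> (nat \<Rightarrow> 'a \<Rightarrow> real) \<Rightarrow> (nat \<Rightarrow> 'a) \<Rightarrow> nat \<Rightarrow> bool" where
  "pd_continue f m \<beta> xk tf z j \<longleftrightarrow>
     f xk - (f (z (j+1)) + m / 2 * (norm (z (j+1) - xk))\<^sup>2) < \<beta> * (f xk - tf j (z (j+1)))"

text \<open>A run of ProxDescent(xk, beta, rho): sequences g_j, tilde f_j, z_j (indices from 1 resp. 2)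
  obeying the rules of the subroutine at every step that is actually executed.\<close>
definition prox_descent_run ::
  "('a::real_inner \<Rightarrow> real) \<Rightarrow> real \<Rightarrow> 'a \<Rightarrow> real \<Rightarrow> real \<Rightarrow>
   (nat \<Rightarrow> 'a) \<Rightarrow> (nat \<Rightarrow> 'a \<Rightarrow> real) \<Rightarrow> (nat \<Rightarrow> 'a) \<Rightarrow> bool" where
  "prox_descent_run f m xk \<beta> \<rho> g tf z \<longleftrightarrow>
     g 1 \<in> wsubdiff m f xk \<and>
     tf 1 = (\<lambda>x. f xk + inner (g 1) (x - xk)) \<and>
     is_prox_min (tf 1) \<rho> xk (z 2) \<and>
     (\<forall>j\<ge>1. (\<forall>i\<in>{1..j}. pd_continue f m \<beta> xk tf z i) \<longrightarrow>
        g (j+1) - m *\<^sub>R (z (j+1) - xk) \<in> wsubdiff m f (z (j+1)) \<and>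
        convex_on UNIV (tf (j+1)) \<and>
        (\<forall>x. tf (j+1) x \<le> f x + m / 2 * (norm (x - xk))\<^sup>2) \<and>
        (\<forall>x. tf (j+1) x \<ge> tf j (z (j+1)) + inner (\<rho> *\<^sub>R (xk - z (j+1))) (x - z (j+1))) \<and>
        (\<forall>x. tf (j+1) x \<ge> f (z (j+1)) + m / 2 * (norm (z (j+1) - xk))\<^sup>2
                           + inner (g (j+1)) (x - z (j+1))) \<and>
        is_prox_min (tf (j+1)) \<rho> xk (z (j+2)))"

end

theory Submission
  imports Defs
begin

text \<open>Let \<open>a\<^sub>j\<close> be the gap between \<open>f(x\<^sub>k)\<close> and the minimal value of the \<open>j\<close>-th proximal
  model \<open>tf\<^sub>j + \<rho>/2 |\<cdot> - x\<^sub>k|\<^sup>2\<close>. Every model minorises \<open>f + m/2 |\<cdot> - x\<^sub>k|\<^sup>2\<close>, so the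
  minimal model value is at most \<open>f\<^sub>\<alpha>(x\<^sub>k)\<close>, i.e. \<open>a\<^sub>j \<ge> \<Delta>\<^sub>k\<close>. While the loop continues, the
  aggregate cut and the linear cut of the next model, mixed with a weight proportional
  to \<open>a\<^sub>j\<close>, give \<open>a\<^sub>j\<^sub>+\<^sub>1 \<le> a\<^sub>j - c a\<^sub>j\<^sup>2\<close> with \<open>c = (1-\<beta>)\<^sup>2\<rho>/(8G\<^sup>2)\<close>; hence \<open>1/a\<^sub>j\<close> grows by at
  least \<open>c\<close> per step. Since \<open>1/a\<^sub>1 \<ge> 2\<rho>/G\<^sup>2\<close> and \<open>1/a\<^sub>T \<le> 1/\<Delta>\<^sub>k\<close>, the bound on \<open>T\<close> follows.
  Termination is the same estimate with a uniform bound on the \<open>g\<^sub>j\<close>: the trial points stay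
  in a ball around \<open>x\<^sub>k\<close>, and the \<open>g\<^sub>j\<close> are subgradients there of the continuous convex
  function \<open>f + m/2 |\<cdot> - x\<^sub>k|\<^sup>2\<close>.\<close>

lemma half_sq_minus_linear_ge:
  fixes \<rho> b t :: real
  assumes "\<rho> > 0"
  shows "- b\<^sup>2 / (2 * \<rho>) \<le> \<rho> / 2 * t\<^sup>2 - b * t"
proof -
  have "0 \<le> (\<rho> * t - b)\<^sup>2 / (2 * \<rho>)" using assms by simp
  also have "\<dots> = \<rho> / 2 * t\<^sup>2 - b * t + b\<^sup>2 / (2 * \<rho>)"
    using assms by (simp add: field_simps power2_eq_square)
  finally show ?thesis by linarith
qed

lemma power2_norm_diff_split:
  fixes x y w :: "'a::real_inner"
  shows "(norm (x - y))\<^sup>2 = (norm (x - w))\<^sup>2 + 2 * inner (x - w) (w - y) + (norm (w - y))\<^sup>2"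
  using dot_norm[of "x - w" "w - y"] by simp

lemma prox_cut_growth:
  fixes xk z x :: "'a::real_inner"
  assumes "p + inner (\<rho> *\<^sub>R (xk - z)) (x - z) \<le> q"
  shows "p + \<rho> / 2 * (norm (z - xk))\<^sup>2 + \<rho> / 2 * (norm (x - z))\<^sup>2
           \<le> q + \<rho> / 2 * (norm (x - xk))\<^sup>2"
proof -
  define u where "u = inner (x - z) (z - xk)"
  have "inner (\<rho> *\<^sub>R (xk - z)) (x - z) = - \<rho> * u"
    unfolding u_def by (simp add: inner_commute inner_diff_right inner_diff_left algebra_simps)
  moreover have "(norm (x - xk))\<^sup>2 = (norm (x - z))\<^sup>2 + 2 * u + (norm (z - xk))\<^sup>2"
    unfolding u_def by (rule power2_norm_diff_split)
  ultimately show ?thesis using assms by (simp add: algebra_simps)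
qed

lemma null_step_progress:
  fixes \<rho> \<beta> G a d e w t \<delta> :: real
  assumes "\<rho> > 0" "0 \<le> \<beta>" "\<beta> < 1" "G > 0" "0 \<le> a" "a \<le> G\<^sup>2 / (2 * \<rho>)" "0 \<le> d"
    and "0 \<le> w" "w \<le> G + \<rho> * d" and "(1 - \<beta>) * (a + \<rho> / 2 * d\<^sup>2) \<le> e"
    and "\<rho> / 2 * t\<^sup>2 \<le> \<delta>" and "e - w * t + \<rho> / 2 * t\<^sup>2 \<le> \<delta>"
  shows "(1 - \<beta>)\<^sup>2 * \<rho> * a\<^sup>2 / (8 * G\<^sup>2) \<le> \<delta>"
proof -
  define l where "l = (1 - \<beta>) * a * \<rho> / (4 * G\<^sup>2)"
  have l0: "0 \<le> l" using assms unfolding l_def by auto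
  have "l \<le> (1 - \<beta>) * (G\<^sup>2 / (2 * \<rho>)) * \<rho> / (4 * G\<^sup>2)"
    unfolding l_def using assms by (intro divide_right_mono mult_right_mono mult_left_mono) auto
  also have "\<dots> = (1 - \<beta>) / 8" using assms by (simp add: field_simps)
  finally have l1: "l \<le> (1 - \<beta>) / 8" .
  have "(1 - l) * (\<rho> / 2 * t\<^sup>2) + l * (e - w * t + \<rho> / 2 * t\<^sup>2) \<le> (1 - l) * \<delta> + l * \<delta>"
    using assms l0 l1 by (intro add_mono mult_left_mono) auto
  then have comb: "l * e + (\<rho> / 2 * t\<^sup>2 - l * w * t) \<le> \<delta>"
    by (simp add: field_simps)
  have w2: "w\<^sup>2 \<le> 2 * G\<^sup>2 + 2 * \<rho>\<^sup>2 * d\<^sup>2"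
  proof -
    have "w\<^sup>2 \<le> (G + \<rho> * d)\<^sup>2" using assms by (intro power_mono) auto
    also have "\<dots> \<le> 2 * G\<^sup>2 + 2 * \<rho>\<^sup>2 * d\<^sup>2"
      using sum_squares_ge_zero[of "G - \<rho> * d" 0] by (simp add: power2_eq_square algebra_simps)
    finally show ?thesis .
  qed
  have "l * ((1 - \<beta>) * (a + \<rho> / 2 * d\<^sup>2)) \<le> l * e" using l0 assms by (intro mult_left_mono) auto
  moreover have "l\<^sup>2 * w\<^sup>2 / (2 * \<rho>) \<le> l\<^sup>2 * (2 * G\<^sup>2 + 2 * \<rho>\<^sup>2 * d\<^sup>2) / (2 * \<rho>)"
    using w2 assms by (intro divide_right_mono mult_left_mono) auto
  moreover note half_sq_minus_linear_ge[OF assms(1), of "l * w" t]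
  ultimately have "l * ((1 - \<beta>) * (a + \<rho> / 2 * d\<^sup>2)) - l\<^sup>2 * (2 * G\<^sup>2 + 2 * \<rho>\<^sup>2 * d\<^sup>2) / (2 * \<rho>) \<le> \<delta>"
    using comb by (simp add: power_mult_distrib mult.assoc)
  moreover have "l * ((1 - \<beta>) * (a + \<rho> / 2 * d\<^sup>2)) - l\<^sup>2 * (2 * G\<^sup>2 + 2 * \<rho>\<^sup>2 * d\<^sup>2) / (2 * \<rho>)
     = 3 / 2 * ((1 - \<beta>)\<^sup>2 * \<rho> * a\<^sup>2 / (8 * G\<^sup>2)) + l * \<rho> * d\<^sup>2 * ((1 - \<beta>) / 2 - l)"
    unfolding l_def using assms by (simp add: field_simps power2_eq_square)
  moreover have "0 \<le> l * \<rho> * d\<^sup>2 * ((1 - \<beta>) / 2 - l)" using l0 l1 assms by auto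
  moreover have "0 \<le> (1 - \<beta>)\<^sup>2 * \<rho> * a\<^sup>2 / (8 * G\<^sup>2)" using assms by auto
  ultimately show ?thesis by linarith
qed

lemma inverse_ge_add_of_quadratic_decrease:
  fixes a b c :: real
  assumes "0 < b" "0 < a" "0 \<le> c" "b \<le> a - c * a\<^sup>2"
  shows "1 / a + c \<le> 1 / b"
proof -
  have "b * (1 / a + c) \<le> (a - c * a\<^sup>2) * (1 / a + c)"
    using assms by (intro mult_right_mono) auto
  also have "\<dots> = 1 - (c * a)\<^sup>2" using assms by (simp add: field_simps power2_eq_square)
  finally have "b * (1 / a + c) \<le> 1" using zero_le_power2[of "c * a"] by linarith
  then show ?thesis using assms by (simp add: field_simps)
qed

lemma iteration_count_arith:
  fixes T \<beta> \<rho> G \<Delta> :: real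
  assumes "0 \<le> \<beta>" "\<beta> < 1" "\<rho> > 0" "G > 0" "\<Delta> > 0"
    and "(T - 1) * ((1 - \<beta>)\<^sup>2 * \<rho> / (8 * G\<^sup>2)) \<le> 1 / \<Delta> - 2 * \<rho> / G\<^sup>2"
  shows "T \<le> 8 * G\<^sup>2 / ((1 - \<beta>)\<^sup>2 * \<rho> * \<Delta>)"
proof -
  define K where "K = 8 * G\<^sup>2 / ((1 - \<beta>)\<^sup>2 * \<rho>)"
  have K0: "K > 0" using assms unfolding K_def by auto
  have "(T - 1) * ((1 - \<beta>)\<^sup>2 * \<rho> / (8 * G\<^sup>2)) * K \<le> (1 / \<Delta> - 2 * \<rho> / G\<^sup>2) * K"
    using assms(6) K0 by (intro mult_right_mono) auto
  moreover have "(1 - \<beta>)\<^sup>2 * \<rho> / (8 * G\<^sup>2) * K = 1"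
    unfolding K_def using assms by (simp add: field_simps)
  then have "(T - 1) * ((1 - \<beta>)\<^sup>2 * \<rho> / (8 * G\<^sup>2)) * K = T - 1"
    by (simp only: mult.assoc mult_1_right)
  moreover have "(1 / \<Delta> - 2 * \<rho> / G\<^sup>2) * K
      = 8 * G\<^sup>2 / ((1 - \<beta>)\<^sup>2 * \<rho> * \<Delta>) - 16 / (1 - \<beta>)\<^sup>2"
    unfolding K_def using assms by (simp add: field_simps)
  moreover have "1 \<le> 16 / (1 - \<beta>)\<^sup>2"
  proof -
    have "(1 - \<beta>)\<^sup>2 \<le> 1" using assms by (simp add: power_le_one)
    then show ?thesis using assms by simp
  qed
  ultimately show ?thesis by linarith
qed

lemma subgradient_norm_le:
  fixes h :: "'a::real_inner \<Rightarrow> real"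
  assumes sub: "\<And>y. h z + inner v (y - z) \<le> h y" and bnd: "\<And>y. y \<in> cball z 1 \<Longrightarrow> h y \<le> M"
  shows "norm v \<le> M - h z"
proof (cases "v = 0")
  case True
  then show ?thesis using bnd[of z] by simp
next
  case False
  define y where "y = z + (1 / norm v) *\<^sub>R v"
  have "inner v (y - z) = norm v"
    using False by (simp add: y_def power2_norm_eq_inner[symmetric] power2_eq_square)
  moreover have "y \<in> cball z 1" using False by (simp add: y_def dist_norm)
  ultimately show ?thesis using sub[of y] bnd[of y] by linarith
qed

locale prox_descent_call =
  fixes f :: "'a::euclidean_space \<Rightarrow> real" and m \<beta> \<rho> :: real and xk :: 'a
    and g :: "nat \<Rightarrow> 'a" and tf :: "nat \<Rightarrow> 'a \<Rightarrow> real" and z :: "nat \<Rightarrow> 'a"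
  assumes f_weakly_convex: "weakly_convex m f"
    and \<beta>_pos: "0 < \<beta>" and \<beta>_less_1: "\<beta> < 1" and \<rho>_pos: "0 < \<rho>"
    and run: "prox_descent_run f m xk \<beta> \<rho> g tf z"
begin

definition f_cvx :: "'a \<Rightarrow> real" where
  "f_cvx x = f x + m / 2 * (norm (x - xk))\<^sup>2"

definition gap :: "nat \<Rightarrow> real" where
  "gap j = f xk - (tf j (z (j + 1)) + \<rho> / 2 * (norm (z (j + 1) - xk))\<^sup>2)"

definition moreau_gap :: real where
  "moreau_gap = f xk - moreau_env f (m + \<rho>) xk"

text \<open>\<open>running j\<close>: the loop condition held at iterations \<open>1..j\<close>, so the models
  \<open>tf 1, \<dots>, tf (j + 1)\<close> and the trial points up to \<open>z (j + 2)\<close> were computed.\<close>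
definition running :: "nat \<Rightarrow> bool" where
  "running j \<longleftrightarrow> (\<forall>i\<in>{1..j}. pd_continue f m \<beta> xk tf z i)"

definition rate :: "real \<Rightarrow> real" where
  "rate G = (1 - \<beta>)\<^sup>2 * \<rho> / (8 * G\<^sup>2)"

lemma running_0 [simp]: "running 0"
  by (simp add: running_def)

lemma running_SucD: "running (Suc j) \<Longrightarrow> running j"
  by (simp add: running_def)

lemma running_pd_continue: "running j \<Longrightarrow> 1 \<le> j \<Longrightarrow> pd_continue f m \<beta> xk tf z j"
  by (simp add: running_def)

lemma run_first:
  shows "g 1 \<in> wsubdiff m f xk"
    and "tf 1 = (\<lambda>x. f xk + inner (g 1) (x - xk))"
    and "is_prox_min (tf 1) \<rho> xk (z 2)"
  using run unfolding prox_descent_run_def by blast+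

lemma run_step:
  assumes "1 \<le> j" "running j"
  shows "tf (j + 1) x \<le> f_cvx x"
    and "tf j (z (j + 1)) + inner (\<rho> *\<^sub>R (xk - z (j + 1))) (x - z (j + 1)) \<le> tf (j + 1) x"
    and "f_cvx (z (j + 1)) + inner (g (j + 1)) (x - z (j + 1)) \<le> tf (j + 1) x"
    and "is_prox_min (tf (j + 1)) \<rho> xk (z (j + 2))"
  using run assms unfolding prox_descent_run_def running_def f_cvx_def by blast+

lemma model_le_f_cvx:
  assumes "running i"
  shows "tf (Suc i) x \<le> f_cvx x"
proof (cases i)
  case 0
  have "f xk + inner (g 1) (x - xk) - m / 2 * (norm (x - xk))\<^sup>2 \<le> f x"
    using run_first(1) unfolding wsubdiff_def by blast
  then show ?thesis using 0 run_first(2) by (simp add: f_cvx_def)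
next
  case (Suc k)
  then show ?thesis using run_step(1)[of i x] assms by simp
qed

lemma model_prox_min:
  assumes "running i"
  shows "is_prox_min (tf (Suc i)) \<rho> xk (z (Suc (Suc i)))"
proof (cases i)
  case 0
  then show ?thesis using run_first(3) by (simp add: numeral_2_eq_2)
next
  case (Suc k)
  then show ?thesis using run_step(4)[of i] assms by (simp add: numeral_2_eq_2)
qed

lemma moreau_gap_le_gap:
  assumes "running i"
  shows "moreau_gap \<le> gap (Suc i)"
proof -
  have "tf (Suc i) (z (Suc (Suc i))) + \<rho> / 2 * (norm (z (Suc (Suc i)) - xk))\<^sup>2
          \<le> f y + (m + \<rho>) / 2 * (norm (y - xk))\<^sup>2" for y
  proof -
    have "tf (Suc i) (z (Suc (Suc i))) + \<rho> / 2 * (norm (z (Suc (Suc i)) - xk))\<^sup>2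
          \<le> tf (Suc i) y + \<rho> / 2 * (norm (y - xk))\<^sup>2"
      using model_prox_min[OF assms] unfolding is_prox_min_def by blast
    also have "\<dots> \<le> f_cvx y + \<rho> / 2 * (norm (y - xk))\<^sup>2"
      using model_le_f_cvx[OF assms] by simp
    also have "\<dots> = f y + (m + \<rho>) / 2 * (norm (y - xk))\<^sup>2"
      unfolding f_cvx_def by (simp add: algebra_simps add_divide_distrib)
    finally show ?thesis .
  qed
  then have "tf (Suc i) (z (Suc (Suc i))) + \<rho> / 2 * (norm (z (Suc (Suc i)) - xk))\<^sup>2
          \<le> moreau_env f (m + \<rho>) xk"
    unfolding moreau_env_def by (intro cINF_greatest) auto
  then show ?thesis unfolding moreau_gap_def gap_def by simp
qed

lemma gap_one_le: "gap 1 \<le> (norm (g 1))\<^sup>2 / (2 * \<rho>)"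
proof -
  define u where "u = z 2 - xk"
  have "gap 1 = - inner (g 1) u - \<rho> / 2 * (norm u)\<^sup>2"
    unfolding gap_def run_first(2) u_def by (simp add: numeral_2_eq_2)
  moreover have "- norm (g 1) * norm u \<le> inner (g 1) u"
    using Cauchy_Schwarz_ineq2[of "g 1" u] by auto
  moreover note half_sq_minus_linear_ge[OF \<rho>_pos, of "norm (g 1)" "norm u"]
  ultimately show ?thesis by linarith
qed

lemma aggregate_cut_growth:
  assumes "1 \<le> j" "running j"
  shows "f xk - gap j + \<rho> / 2 * (norm (x - z (Suc j)))\<^sup>2
           \<le> tf (Suc j) x + \<rho> / 2 * (norm (x - xk))\<^sup>2"
  using prox_cut_growth[OF run_step(2)[OF assms, of x]] by (simp add: gap_def)

lemma linear_cut_growth: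
  assumes "1 \<le> j" "running j"
  shows "f xk - gap j + (f_cvx (z (Suc j)) - tf j (z (Suc j)))
           + inner (g (Suc j) + \<rho> *\<^sub>R (z (Suc j) - xk)) (x - z (Suc j))
           + \<rho> / 2 * (norm (x - z (Suc j)))\<^sup>2
         \<le> tf (Suc j) x + \<rho> / 2 * (norm (x - xk))\<^sup>2"
proof -
  define u where "u = inner (x - z (Suc j)) (z (Suc j) - xk)"
  have "inner (g (Suc j) + \<rho> *\<^sub>R (z (Suc j) - xk)) (x - z (Suc j))
      = inner (g (Suc j)) (x - z (Suc j)) + \<rho> * u"
    unfolding u_def
    by (simp only: inner_add_left inner_scaleR_left inner_commute[of "z (Suc j) - xk"])
  moreover have "(norm (x - xk))\<^sup>2 = (norm (x - z (Suc j)))\<^sup>2 + 2 * u + (norm (z (Suc j) - xk))\<^sup>2"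
    unfolding u_def by (rule power2_norm_diff_split)
  moreover note run_step(3)[OF assms, of x]
  ultimately show ?thesis by (simp add: gap_def algebra_simps)
qed

lemma gap_Suc_le:
  assumes "1 \<le> j" "running j"
  shows "gap (Suc j) + \<rho> / 2 * (norm (z (Suc (Suc j)) - z (Suc j)))\<^sup>2 \<le> gap j"
  using aggregate_cut_growth[OF assms, of "z (Suc (Suc j))"] by (simp add: gap_def)

lemma gap_le_gap_one: "running i \<Longrightarrow> gap (Suc i) \<le> gap 1"
proof (induction i)
  case (Suc i)
  have "0 \<le> \<rho> / 2 * (norm (z (Suc (Suc (Suc i))) - z (Suc (Suc i))))\<^sup>2"
    using \<rho>_pos by simp
  then have "gap (Suc (Suc i)) \<le> gap (Suc i)"
    using gap_Suc_le[of "Suc i"] Suc.prems by simp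
  then show ?case using Suc running_SucD by fastforce
qed simp

lemma gap_le_bound:
  assumes "running i" "norm (g 1) \<le> G"
  shows "gap (Suc i) \<le> G\<^sup>2 / (2 * \<rho>)"
proof -
  have "gap (Suc i) \<le> gap 1" by (rule gap_le_gap_one[OF assms(1)])
  also have "\<dots> \<le> (norm (g 1))\<^sup>2 / (2 * \<rho>)" by (rule gap_one_le)
  also have "\<dots> \<le> G\<^sup>2 / (2 * \<rho>)"
    using assms(2) \<rho>_pos by (intro divide_right_mono power_mono) auto
  finally show ?thesis .
qed

lemma continue_margin:
  assumes "1 \<le> j" "running j"
  shows "(1 - \<beta>) * (gap j + \<rho> / 2 * (norm (z (Suc j) - xk))\<^sup>2)
           \<le> f_cvx (z (Suc j)) - tf j (z (Suc j))"
proof -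
  have "f xk - f_cvx (z (Suc j)) < \<beta> * (f xk - tf j (z (Suc j)))"
    using running_pd_continue[OF assms(2,1)] unfolding pd_continue_def f_cvx_def by simp
  moreover have "(1 - \<beta>) * (gap j + \<rho> / 2 * (norm (z (Suc j) - xk))\<^sup>2)
      = (f xk - tf j (z (Suc j))) - \<beta> * (f xk - tf j (z (Suc j)))"
    unfolding gap_def by (simp add: algebra_simps)
  ultimately show ?thesis by linarith
qed

lemma gap_nonneg:
  assumes "running i"
  shows "0 \<le> gap (Suc i)"
proof -
  have "tf (Suc i) (z (Suc (Suc i))) + \<rho> / 2 * (norm (z (Suc (Suc i)) - xk))\<^sup>2 \<le> tf (Suc i) xk"
    using model_prox_min[OF assms] unfolding is_prox_min_def by (metis diff_self norm_zero
        power_zero_numeral mult_zero_right add_0_right)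
  also have "\<dots> \<le> f xk" using model_le_f_cvx[OF assms, of xk] by (simp add: f_cvx_def)
  finally show ?thesis by (simp add: gap_def)
qed

lemma gap_decrease:
  assumes j: "1 \<le> j" "running j" and G: "0 < G" "norm (g 1) \<le> G" "norm (g (Suc j)) \<le> G"
  shows "gap (Suc j) \<le> gap j - rate G * (gap j)\<^sup>2"
proof -
  obtain i where i: "j = Suc i" using j(1) by (cases j) auto
  have built: "running i" using j(2) running_SucD i by simp
  define zz where "zz = z (Suc j)"
  define d where "d = norm (zz - xk)"
  define t where "t = norm (z (Suc (Suc j)) - zz)"
  define e where "e = f_cvx zz - tf j zz"
  define w where "w = g (Suc j) + \<rho> *\<^sub>R (zz - xk)"
  have gap_le: "gap j \<le> G\<^sup>2 / (2 * \<rho>)" using gap_le_bound[OF built G(2)] i by simp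
  have e_ge: "(1 - \<beta>) * (gap j + \<rho> / 2 * d\<^sup>2) \<le> e"
    using continue_margin[OF j] unfolding e_def d_def zz_def .
  have w_le: "norm w \<le> G + \<rho> * d"
    using norm_triangle_ineq[of "g (Suc j)" "\<rho> *\<^sub>R (zz - xk)"] G(3) \<rho>_pos
    unfolding w_def d_def zz_def by simp
  have cut_aggregate: "\<rho> / 2 * t\<^sup>2 \<le> gap j - gap (Suc j)"
    using gap_Suc_le[OF j] unfolding t_def zz_def by simp
  have cut_linear: "e - norm w * t + \<rho> / 2 * t\<^sup>2 \<le> gap j - gap (Suc j)"
  proof -
    have "- norm w * t \<le> inner w (z (Suc (Suc j)) - zz)"
      using Cauchy_Schwarz_ineq2[of w "z (Suc (Suc j)) - zz"] unfolding t_def by auto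
    moreover have "f xk - gap j + e + inner w (z (Suc (Suc j)) - zz) + \<rho> / 2 * t\<^sup>2
        \<le> f xk - gap (Suc j)"
      using linear_cut_growth[OF j, of "z (Suc (Suc j))"]
      unfolding gap_def[of "Suc j"] e_def w_def t_def zz_def by simp
    ultimately show ?thesis by linarith
  qed
  have "0 \<le> gap j" using gap_nonneg[OF built] i by simp
  with \<beta>_pos have "(1 - \<beta>)\<^sup>2 * \<rho> * (gap j)\<^sup>2 / (8 * G\<^sup>2) \<le> gap j - gap (Suc j)"
    using null_step_progress[OF \<rho>_pos _ \<beta>_less_1 G(1) _ gap_le _ norm_ge_zero w_le e_ge
        cut_aggregate cut_linear]
    unfolding d_def by simp
  then show ?thesis unfolding rate_def by simp
qed

lemma inverse_gap_step:
  assumes pos: "0 < moreau_gap" and j: "1 \<le> j" "running j"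
    and G: "0 < G" "norm (g 1) \<le> G" "norm (g (Suc j)) \<le> G"
  shows "1 / gap j + rate G \<le> 1 / gap (Suc j)"
proof (rule inverse_ge_add_of_quadratic_decrease)
  obtain i where i: "j = Suc i" using j(1) by (cases j) auto
  show "0 < gap j" using moreau_gap_le_gap[of i] running_SucD j(2) i pos by fastforce
  show "0 < gap (Suc j)" using moreau_gap_le_gap[OF j(2)] pos by simp
  show "0 \<le> rate G" unfolding rate_def using \<rho>_pos by simp
  show "gap (Suc j) \<le> gap j - rate G * (gap j)\<^sup>2" by (rule gap_decrease[OF j G])
qed

lemma inverse_gap_growth:
  assumes "0 < moreau_gap" "0 < G"
  shows "running N \<Longrightarrow> \<forall>j\<in>{1..Suc N}. norm (g j) \<le> G
           \<Longrightarrow> 1 / gap 1 + N * rate G \<le> 1 / gap (Suc N)"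
proof (induction N)
  case (Suc N)
  then have "1 / gap 1 + N * rate G \<le> 1 / gap (Suc N)" using running_SucD by simp
  moreover have "1 / gap (Suc N) + rate G \<le> 1 / gap (Suc (Suc N))"
    using inverse_gap_step[of "Suc N" G] assms Suc.prems by simp
  ultimately show ?case by (simp add: algebra_simps)
qed simp

lemma running_count_bound:
  assumes pos: "0 < moreau_gap" and "running N" "0 < G" "\<forall>j\<in>{1..Suc N}. norm (g j) \<le> G"
  shows "N * rate G \<le> 1 / moreau_gap - 2 * \<rho> / G\<^sup>2"
proof -
  have "gap 1 \<le> G\<^sup>2 / (2 * \<rho>)" using gap_le_bound[of 0 G] assms(4) by simp
  moreover have "0 < gap 1" using moreau_gap_le_gap[of 0] pos by simp
  ultimately have "2 * \<rho> / G\<^sup>2 \<le> 1 / gap 1"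
    using \<rho>_pos assms(3) by (simp add: field_simps)
  moreover have "1 / gap (Suc N) \<le> 1 / moreau_gap"
    using moreau_gap_le_gap[OF assms(2)] pos by (simp add: frac_le)
  ultimately show ?thesis using inverse_gap_growth[OF pos assms(3,2,4)] by linarith
qed

lemma norm_g_one_pos:
  assumes "0 < moreau_gap"
  shows "0 < norm (g 1)"
proof -
  have "0 < (norm (g 1))\<^sup>2 / (2 * \<rho>)"
    using assms moreau_gap_le_gap[of 0] gap_one_le by simp
  then show ?thesis using \<rho>_pos by (auto simp: zero_less_divide_iff)
qed

lemma iterate_dist_le:
  assumes j: "1 \<le> j" "running j"
  shows "\<rho> * norm (z (Suc j) - xk) \<le> norm (g 1)"
proof -
  obtain i where i: "j = Suc i" using j(1) by (cases j) auto
  have "tf (Suc j) xk \<le> f xk" using model_le_f_cvx[OF j(2), of xk] by (simp add: f_cvx_def)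
  then have "\<rho> / 2 * (norm (z (Suc j) - xk))\<^sup>2 \<le> gap j"
    using aggregate_cut_growth[OF j, of xk] by (simp add: norm_minus_commute)
  also have "\<dots> \<le> gap 1" using gap_le_gap_one[of i] running_SucD j(2) i by simp
  also have "\<dots> \<le> (norm (g 1))\<^sup>2 / (2 * \<rho>)" by (rule gap_one_le)
  finally have "(\<rho> * norm (z (Suc j) - xk))\<^sup>2 \<le> (norm (g 1))\<^sup>2"
    using \<rho>_pos by (simp add: field_simps power2_eq_square)
  then show ?thesis by (rule power2_le_imp_le) simp
qed

lemma g_subgradient_f_cvx:
  assumes "1 \<le> j" "running j"
  shows "f_cvx (z (Suc j)) + inner (g (Suc j)) (y - z (Suc j)) \<le> f_cvx y"
  using run_step(3)[OF assms, of y] model_le_f_cvx[OF assms(2), of y] by simp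

lemma f_cvx_continuous: "continuous_on UNIV f_cvx"
proof -
  define F where "F x = f x + m / 2 * (norm x)\<^sup>2" for x
  have F: "continuous_on UNIV F"
    using f_weakly_convex convex_on_continuous[OF open_UNIV]
    unfolding weakly_convex_def F_def[abs_def] by auto
  have "f_cvx = (\<lambda>x. F x - m / 2 * (norm x)\<^sup>2 + m / 2 * (norm (x - xk))\<^sup>2)"
    by (auto simp: f_cvx_def F_def fun_eq_iff)
  then show ?thesis by (simp only:) (intro continuous_intros F)
qed

lemma subgradients_bounded:
  assumes "\<And>j. running j"
  obtains B where "\<And>j. 1 \<le> j \<Longrightarrow> norm (g j) \<le> B"
proof -
  define R where "R = norm (g 1) / \<rho>"
  have "0 \<le> R" unfolding R_def using \<rho>_pos by simp
  then have "cball xk (R + 1) \<noteq> {}" by simp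
  then obtain y0 where y0: "\<And>y. y \<in> cball xk (R + 1) \<Longrightarrow> f_cvx y \<le> f_cvx y0"
    using continuous_attains_sup[OF compact_cball _ continuous_on_subset[OF f_cvx_continuous]]
    by blast
  have "norm (g (Suc j)) \<le> f_cvx y0 - f xk + norm (g 1) * R" if j: "1 \<le> j" for j
  proof -
    define zz where "zz = z (Suc j)"
    have dist: "norm (zz - xk) \<le> R"
      using iterate_dist_le[OF j assms] \<rho>_pos unfolding R_def zz_def by (simp add: field_simps)
    have "norm (g (Suc j)) \<le> f_cvx y0 - f_cvx zz"
    proof (rule subgradient_norm_le)
      show "f_cvx zz + inner (g (Suc j)) (y - zz) \<le> f_cvx y" for y
        unfolding zz_def by (rule g_subgradient_f_cvx[OF j assms])
      show "f_cvx y \<le> f_cvx y0" if "y \<in> cball zz 1" for y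
      proof (rule y0)
        have "dist xk y \<le> dist xk zz + dist zz y" by (rule dist_triangle)
        then show "y \<in> cball xk (R + 1)"
          using dist that by (simp add: dist_norm norm_minus_commute)
      qed
    qed
    moreover have "f xk - norm (g 1) * R \<le> f_cvx zz"
    proof -
      have "- (norm (g 1) * R) \<le> inner (g 1) (zz - xk)"
        using Cauchy_Schwarz_ineq2[of "g 1" "zz - xk"] mult_left_mono[OF dist norm_ge_zero[of "g 1"]]
        by (simp add: abs_le_iff)
      then show ?thesis using model_le_f_cvx[of 0 zz] run_first(2) by simp
    qed
    ultimately show ?thesis by linarith
  qed
  then have "norm (g j) \<le> max (norm (g 1)) (f_cvx y0 - f xk + norm (g 1) * R)" if "1 \<le> j" for j
  proof (cases "j = 1")
    case False
    then obtain k where "j = Suc k" "1 \<le> k" using \<open>1 \<le> j\<close> by (cases j) auto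
    then show ?thesis using \<open>\<And>k. 1 \<le> k \<Longrightarrow> _\<close> by (simp add: le_max_iff_disj)
  qed simp
  then show ?thesis using that by blast
qed

lemma loop_terminates:
  assumes pos: "0 < moreau_gap"
  obtains T where "1 \<le> T" "\<not> pd_continue f m \<beta> xk tf z T" "running (T - 1)"
proof -
  have "\<exists>T. 1 \<le> T \<and> \<not> pd_continue f m \<beta> xk tf z T"
  proof (rule ccontr)
    assume "\<not> ?thesis"
    then have all: "running j" for j unfolding running_def by auto
    obtain B where B: "\<And>j. 1 \<le> j \<Longrightarrow> norm (g j) \<le> B" using subgradients_bounded[OF all] by blast
    have B_pos: "0 < B" using norm_g_one_pos[OF pos] B[of 1] by linarith
    have rate_pos: "0 < rate B" unfolding rate_def using \<beta>_less_1 \<rho>_pos B_pos by simp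
    obtain N :: nat where "1 / moreau_gap < N * rate B" using reals_Archimedean3[OF rate_pos] by blast
    moreover have "N * rate B \<le> 1 / moreau_gap - 2 * \<rho> / B\<^sup>2"
      using running_count_bound[OF pos all B_pos] B by simp
    moreover have "0 \<le> 2 * \<rho> / B\<^sup>2" using \<rho>_pos by simp
    ultimately show False by linarith
  qed
  then obtain T where T: "1 \<le> T" "\<not> pd_continue f m \<beta> xk tf z T"
    and least: "\<And>i. i < T \<Longrightarrow> \<not> (1 \<le> i \<and> \<not> pd_continue f m \<beta> xk tf z i)"
    using exists_least_iff[of "\<lambda>T. 1 \<le> T \<and> \<not> pd_continue f m \<beta> xk tf z T"] by blast
  have "running (T - 1)" unfolding running_def using least by force
  with T show ?thesis using that by blast
qed

end

theorem mainTheorem8: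
  fixes f :: "real ^ 'n \<Rightarrow> real" and m \<beta> \<rho> :: real and xk :: "real ^ 'n"
    and g :: "nat \<Rightarrow> real ^ 'n" and tf :: "nat \<Rightarrow> real ^ 'n \<Rightarrow> real" and z :: "nat \<Rightarrow> real ^ 'n"
  assumes "m \<ge> 0" and "weakly_convex m f"
    and "0 < \<beta>" and "\<beta> < 1" and "\<rho> > 0"
    and "f xk - moreau_env f (m + \<rho>) xk > 0"
    and "prox_descent_run f m xk \<beta> \<rho> g tf z"
  shows "\<exists>T\<ge>1. \<not> pd_continue f m \<beta> xk tf z T \<and> (\<forall>i\<in>{1..<T}. pd_continue f m \<beta> xk tf z i) \<and>
           real T \<le> 8 * (Max ((\<lambda>j. norm (g j)) ` {1..T}))\<^sup>2
                     / ((1 - \<beta>)\<^sup>2 * \<rho> * (f xk - moreau_env f (m + \<rho>) xk))"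
proof -
  interpret prox_descent_call f m \<beta> \<rho> xk g tf z
    using assms by unfold_locales
  have pos: "0 < moreau_gap" using assms(6) unfolding moreau_gap_def .
  obtain T where T: "1 \<le> T" "\<not> pd_continue f m \<beta> xk tf z T" "running (T - 1)"
    using loop_terminates[OF pos] .
  define G where "G = Max ((\<lambda>j. norm (g j)) ` {1..T})"
  have G_ge: "\<forall>j\<in>{1..Suc (T - 1)}. norm (g j) \<le> G"
    unfolding G_def using T(1) by simp
  have "norm (g 1) \<le> G" using G_ge T(1) by simp
  with norm_g_one_pos[OF pos] have G_pos: "0 < G" by linarith
  have "real (T - 1) * rate G \<le> 1 / moreau_gap - 2 * \<rho> / G\<^sup>2"
    by (rule running_count_bound[OF pos T(3) G_pos G_ge])
  then have "real T \<le> 8 * G\<^sup>2 / ((1 - \<beta>)\<^sup>2 * \<rho> * moreau_gap)"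
    using iteration_count_arith[OF _ assms(4,5) G_pos pos] assms(3) T(1)
    by (simp add: rate_def of_nat_diff)
  moreover have "\<forall>i\<in>{1..<T}. pd_continue f m \<beta> xk tf z i"
    using T(3) unfolding running_def by auto
  ultimately show ?thesis using T unfolding G_def moreau_gap_def by blast
qed

end
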